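(* Let $\rho_n\rightarrow_C\rho_{n-1}\rightarrow_C\cdots\rightarrow_C\rho_1$ ($n\ge1$) be a trace of tidy formulas. Then there is a unique $\rho\in\{\rho_1,\dots,\rho_n\}$ such that $\rho\trianglelefteq_f\rho_i$ for all $i\in\{1,\dots,n\}$ (so that the given trace witnesses $\rho_n\twoheadrightarrow_C^{\rho}\rho_1$). Moreover, if $\rho_1$ is a fixpoint formula then so is $\rho$.
   Context: Syntax. Formulas of the modal $\mu$-calculus are taken in negation normal form: $\phi ::= \top \mid \bot \mid p \mid \neg p \mid x \mid \phi\land\phi\mid\phi\lor\phi\mid\Diamond\phi\mid\Box\phi\mid\mu x.\phi\mid\nu x.\phi$, where $p$ ranges over proposition letters and $x$ over an infinite supply of variables (which occur only positively). The formulas $\top,\bot,p,\neg p,x$ are atomic. $\mathrm{FV}(\phi)$ and $\mathrm{BV}(\phi)$ are the sets of free and bound variables of $\phi$; $\phi$ is tidy if $\mathrm{FV}(\phi)\cap\mathrm{BV}(\phi)=\varnothing$. A fixpoint formula is one of the form $\eta x.\chi$ with $\eta\in\{\mu,\nu\}$. $\chi[\xi/x]$ is the result of replacing every free occurrence of $x$ in $\chi$ by $\xi$; $\xi$ is free for $x$ in $\chi$ if no free variable of $\xi$ becomes bound in $\chi[\xi/x]$. Traces. The trace relation $\rightarrow_C$: $\phi_0\odot\phi_1\rightarrow_C\phi_i$ for $\odot\in\{\land,\lor\}$, $i\in\{0,1\}$; $\heartsuit\phi\rightarrow_C\phi$ for $\heartsuit\in\{\Diamond,\Box\}$; $\eta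 x.\phi\rightarrow_C\phi[\eta x.\phi/x]$; atomic formulas have no successors. A trace is a sequence of formulas with consecutive members related by $\rightarrow_C$. Free subformulas. $\phi\trianglelefteq_f\psi$ iff $\psi=\chi[\phi/y]$ for some formula $\chi$ and variable $y$ with $y\in\mathrm{FV}(\chi)$ and $\phi$ free for $y$ in $\chi$. For a formula $\psi$, $\rho\twoheadrightarrow_C^{\psi}\sigma$ iff there is a trace $\rho=\chi_0\rightarrow_C\cdots\rightarrow_C\chi_m=\sigma$ ($m\ge0$) with $\psi\trianglelefteq_f\chi_i$ for all $i\le m$. *)

theory Defs
  imports Main
begin

text \<open>Modal mu-calculus formulas in negation normal form. Proposition letters range
over an arbitrary type 'p; variables range over nat (an infinite supply).\<close>

type_synonym var = nat

datatype 'p fml =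
    Top | Bot | Prop 'p | NProp 'p | Var var
  | And "'p fml" "'p fml" | Or "'p fml" "'p fml"
  | Dia "'p fml" | Box "'p fml"
  | Mu var "'p fml" | Nu var "'p fml"

fun FV :: "'p fml \<Rightarrow> var set" where
  "FV Top = {}" | "FV Bot = {}" | "FV (Prop p) = {}" | "FV (NProp p) = {}"
| "FV (Var x) = {x}"
| "FV (And a b) = FV a \<union> FV b" | "FV (Or a b) = FV a \<union> FV b"
| "FV (Dia a) = FV a" | "FV (Box a) = FV a"
| "FV (Mu x a) = FV a - {x}" | "FV (Nu x a) = FV a - {x}"

fun BV :: "'p fml \<Rightarrow> var set" where
  "BV Top = {}" | "BV Bot = {}" | "BV (Prop p) = {}" | "BV (NProp p) = {}"
| "BV (Var x) = {}"
| "BV (And a b) = BV a \<union> BV b" | "BV (Or a b) = BV a \<union> BV b"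
| "BV (Dia a) = BV a" | "BV (Box a) = BV a"
| "BV (Mu x a) = insert x (BV a)" | "BV (Nu x a) = insert x (BV a)"

definition tidy :: "'p fml \<Rightarrow> bool" where
  "tidy \<phi> \<longleftrightarrow> FV \<phi> \<inter> BV \<phi> = {}"

fun is_fixpoint :: "'p fml \<Rightarrow> bool" where
  "is_fixpoint (Mu x a) = True" | "is_fixpoint (Nu x a) = True"
| "is_fixpoint _ = False"

text \<open>subst chi x xi = chi[xi/x]: replace every free occurrence of x in chi by xi
(no renaming of bound variables).\<close>
fun subst :: "'p fml \<Rightarrow> var \<Rightarrow> 'p fml \<Rightarrow> 'p fml" where
  "subst Top x \<xi> = Top" | "subst Bot x \<xi> = Bot"
| "subst (Prop p) x \<xi> = Prop p" | "subst (NProp p) x \<xi> = NProp p"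
| "subst (Var y) x \<xi> = (if y = x then \<xi> else Var y)"
| "subst (And a b) x \<xi> = And (subst a x \<xi>) (subst b x \<xi>)"
| "subst (Or a b) x \<xi> = Or (subst a x \<xi>) (subst b x \<xi>)"
| "subst (Dia a) x \<xi> = Dia (subst a x \<xi>)"
| "subst (Box a) x \<xi> = Box (subst a x \<xi>)"
| "subst (Mu y a) x \<xi> = (if y = x then Mu y a else Mu y (subst a x \<xi>))"
| "subst (Nu y a) x \<xi> = (if y = x then Nu y a else Nu y (subst a x \<xi>))"

text \<open>free_for xi x chi: no free variable of xi becomes bound in chi[xi/x], i.e. no free
occurrence of x in chi lies in the scope of a binder for a free variable of xi.\<close>
fun free_for :: "'p fml \<Rightarrow> var \<Rightarrow> 'p fml \<Rightarrow> bool" where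
  "free_for \<xi> x Top = True" | "free_for \<xi> x Bot = True"
| "free_for \<xi> x (Prop p) = True" | "free_for \<xi> x (NProp p) = True"
| "free_for \<xi> x (Var y) = True"
| "free_for \<xi> x (And a b) = (free_for \<xi> x a \<and> free_for \<xi> x b)"
| "free_for \<xi> x (Or a b) = (free_for \<xi> x a \<and> free_for \<xi> x b)"
| "free_for \<xi> x (Dia a) = free_for \<xi> x a"
| "free_for \<xi> x (Box a) = free_for \<xi> x a"
| "free_for \<xi> x (Mu y a) = (y = x \<or> ((x \<notin> FV a \<or> y \<notin> FV \<xi>) \<and> free_for \<xi> x a))"
| "free_for \<xi> x (Nu y a) = (y = x \<or> ((x \<notin> FV a \<or> y \<notin> FV \<xi>) \<and> free_for \<xi> x a))"

inductive trace_step :: "'p fml \<Rightarrow> 'p fml \<Rightarrow> bool" where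
  "trace_step (And a b) a" | "trace_step (And a b) b"
| "trace_step (Or a b) a" | "trace_step (Or a b) b"
| "trace_step (Dia a) a" | "trace_step (Box a) a"
| "trace_step (Mu x a) (subst a x (Mu x a))"
| "trace_step (Nu x a) (subst a x (Nu x a))"

definition free_sub :: "'p fml \<Rightarrow> 'p fml \<Rightarrow> bool" where
  "free_sub \<phi> \<psi> \<longleftrightarrow> (\<exists>\<chi> y. \<psi> = subst \<chi> y \<phi> \<and> y \<in> FV \<chi> \<and> free_for \<phi> y \<chi>)"

end

theory Submission
  imports Defs
begin

text \<open>The free-subformula relation has a syntax-directed description: \<open>\<phi> \<unlhd> \<psi>\<close> iff \<open>\<phi>\<close>
occurs in \<open>\<psi>\<close> without lying under a binder of one of its free variables. In this form
it is visibly a partial order. For a tidy fixpoint formula \<open>\<eta>x.a\<close>, every free subformula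
of its unfolding \<open>a[\<eta>x.a/x]\<close> is either a free subformula of \<open>\<eta>x.a\<close> or contains \<open>\<eta>x.a\<close>; the
other trace steps only pass to an immediate subformula. Hence, reading the trace backwards
from \<open>\<rho>\<^sub>n\<close>, the \<open>\<unlhd>\<close>-least formula met so far is comparable with every free subformula
of the current one, and therefore either stays below the next formula or is replaced by
it. The resulting least element is unique by antisymmetry, and it is a fixpoint formula
unless it is \<open>\<rho>\<^sub>1\<close>, because a non-fixpoint step strictly decreases size.\<close>

inductive free_subfml :: "'p fml \<Rightarrow> 'p fml \<Rightarrow> bool" (infix "\<unlhd>" 50) where
  refl: "\<phi> \<unlhd> \<phi>"
| And1: "\<phi> \<unlhd> a \<Longrightarrow> \<phi> \<unlhd> And a b"
| And2: "\<phi> \<unlhd> b \<Longrightarrow> \<phi> \<unlhd> And a b"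
| Or1: "\<phi> \<unlhd> a \<Longrightarrow> \<phi> \<unlhd> Or a b"
| Or2: "\<phi> \<unlhd> b \<Longrightarrow> \<phi> \<unlhd> Or a b"
| Dia: "\<phi> \<unlhd> a \<Longrightarrow> \<phi> \<unlhd> Dia a"
| Box: "\<phi> \<unlhd> a \<Longrightarrow> \<phi> \<unlhd> Box a"
| Mu: "\<phi> \<unlhd> a \<Longrightarrow> x \<notin> FV \<phi> \<Longrightarrow> \<phi> \<unlhd> Mu x a"
| Nu: "\<phi> \<unlhd> a \<Longrightarrow> x \<notin> FV \<phi> \<Longrightarrow> \<phi> \<unlhd> Nu x a"

lemma free_subfml_FV: "\<phi> \<unlhd> \<psi> \<Longrightarrow> FV \<phi> \<subseteq> FV \<psi>"
  by (induction rule: free_subfml.induct) auto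

lemma free_subfml_trans:
  assumes "\<phi> \<unlhd> \<psi>" and "\<psi> \<unlhd> \<chi>"
  shows "\<phi> \<unlhd> \<chi>"
  using assms(2,1)
  by (induction rule: free_subfml.induct) (auto intro: free_subfml.intros dest: free_subfml_FV)

lemma free_subfml_size: "\<phi> \<unlhd> \<psi> \<Longrightarrow> \<phi> = \<psi> \<or> size \<phi> < size \<psi>"
  by (induction rule: free_subfml.induct) auto

lemma free_subfml_antisym: "\<phi> \<unlhd> \<psi> \<Longrightarrow> \<psi> \<unlhd> \<phi> \<Longrightarrow> \<phi> = \<psi>"
  by (metis free_subfml_size less_asym)

lemma subst_fresh: "y \<notin> FV \<chi> \<Longrightarrow> subst \<chi> y \<phi> = \<chi>"
  by (induction \<chi>) auto

lemma free_subfml_subst: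
  "x \<in> FV \<theta> \<Longrightarrow> FV \<rho> \<inter> BV \<theta> = {} \<Longrightarrow> \<rho> \<unlhd> subst \<theta> x \<rho>"
  by (induction \<theta>) (auto intro: free_subfml.intros)

lemma subst_self_cases:
  "FV \<rho> \<inter> BV \<theta> = {} \<Longrightarrow> \<rho> \<unlhd> subst \<theta> x \<rho> \<or> (subst \<theta> x \<rho> = \<theta> \<and> x \<notin> FV \<theta>)"
  using free_subfml_subst subst_fresh by metis

lemma free_subfml_of_subst:
  assumes "FV \<rho> \<inter> BV \<theta> = {}" and "\<tau> \<unlhd> subst \<theta> x \<rho>"
  shows "\<tau> \<unlhd> \<rho> \<or> \<rho> \<unlhd> \<tau> \<or> (\<tau> \<unlhd> \<theta> \<and> x \<notin> FV \<tau>)"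
  using assms
proof (induction \<theta> arbitrary: \<tau>)
  case (And a b)
  from And.prems(2) show ?case
  proof cases
    case refl
    then show ?thesis using subst_self_cases[OF And.prems(1), of x] by (auto intro: free_subfml.refl)
  qed (use And in \<open>auto simp: subst_fresh dest: free_subfml_FV split: if_splits intro: free_subfml.intros\<close>)
next
  case (Or a b)
  from Or.prems(2) show ?case
  proof cases
    case refl
    then show ?thesis using subst_self_cases[OF Or.prems(1), of x] by (auto intro: free_subfml.refl)
  qed (use Or in \<open>auto simp: subst_fresh dest: free_subfml_FV split: if_splits intro: free_subfml.intros\<close>)
next
  case (Dia a)
  from Dia.prems(2) show ?case
  proof cases
    case refl
    then show ?thesis using subst_self_cases[OF Dia.prems(1), of x] by (auto intro: free_subfml.refl)
  qed (use Dia in \<open>auto simp: subst_fresh dest: free_subfml_FV split: if_splits intro: free_subfml.intros\<close>)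
next
  case (Box a)
  from Box.prems(2) show ?case
  proof cases
    case refl
    then show ?thesis using subst_self_cases[OF Box.prems(1), of x] by (auto intro: free_subfml.refl)
  qed (use Box in \<open>auto simp: subst_fresh dest: free_subfml_FV split: if_splits intro: free_subfml.intros\<close>)
next
  case (Mu z a)
  from Mu.prems(2) show ?case
  proof cases
    case refl
    then show ?thesis using subst_self_cases[OF Mu.prems(1), of x] by (auto intro: free_subfml.refl)
  qed (use Mu in \<open>auto simp: subst_fresh dest: free_subfml_FV split: if_splits intro: free_subfml.intros\<close>)
next
  case (Nu z a)
  from Nu.prems(2) show ?case
  proof cases
    case refl
    then show ?thesis using subst_self_cases[OF Nu.prems(1), of x] by (auto intro: free_subfml.refl)
  qed (use Nu in \<open>auto simp: subst_fresh dest: free_subfml_FV split: if_splits intro: free_subfml.intros\<close>)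
qed (auto split: if_splits elim: free_subfml.cases intro: free_subfml.intros)

lemma free_for_fresh: "y \<notin> FV \<chi> \<Longrightarrow> free_for \<phi> y \<chi>"
  by (induction \<chi>) auto

lemma free_subfml_of_context: "y \<in> FV \<chi> \<Longrightarrow> free_for \<phi> y \<chi> \<Longrightarrow> \<phi> \<unlhd> subst \<chi> y \<phi>"
  by (induction \<chi>) (auto intro: free_subfml.intros)

lemma context_of_free_subfml:
  "\<phi> \<unlhd> \<psi> \<Longrightarrow> y \<notin> FV \<psi> \<union> BV \<psi> \<Longrightarrow> \<exists>\<chi>. \<psi> = subst \<chi> y \<phi> \<and> y \<in> FV \<chi> \<and> free_for \<phi> y \<chi>"
proof (induction rule: free_subfml.induct)
  case (refl \<phi>)
  show ?case by (rule exI[of _ "Var y"]) simp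
next
  case (And1 \<phi> a b)
  then obtain \<chi> where "subst \<chi> y \<phi> = a" "y \<in> FV \<chi>" "free_for \<phi> y \<chi>" by auto
  with And1.prems show ?case by (intro exI[of _ "And \<chi> b"]) (auto simp: subst_fresh free_for_fresh)
next
  case (And2 \<phi> b a)
  then obtain \<chi> where "subst \<chi> y \<phi> = b" "y \<in> FV \<chi>" "free_for \<phi> y \<chi>" by auto
  with And2.prems show ?case by (intro exI[of _ "And a \<chi>"]) (auto simp: subst_fresh free_for_fresh)
next
  case (Or1 \<phi> a b)
  then obtain \<chi> where "subst \<chi> y \<phi> = a" "y \<in> FV \<chi>" "free_for \<phi> y \<chi>" by auto
  with Or1.prems show ?case by (intro exI[of _ "Or \<chi> b"]) (auto simp: subst_fresh free_for_fresh)
next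
  case (Or2 \<phi> b a)
  then obtain \<chi> where "subst \<chi> y \<phi> = b" "y \<in> FV \<chi>" "free_for \<phi> y \<chi>" by auto
  with Or2.prems show ?case by (intro exI[of _ "Or a \<chi>"]) (auto simp: subst_fresh free_for_fresh)
next
  case (Dia \<phi> a)
  then obtain \<chi> where "subst \<chi> y \<phi> = a" "y \<in> FV \<chi>" "free_for \<phi> y \<chi>" by auto
  with Dia.prems show ?case by (intro exI[of _ "Dia \<chi>"]) (auto simp: subst_fresh free_for_fresh)
next
  case (Box \<phi> a)
  then obtain \<chi> where "subst \<chi> y \<phi> = a" "y \<in> FV \<chi>" "free_for \<phi> y \<chi>" by auto
  with Box.prems show ?case by (intro exI[of _ "Box \<chi>"]) (auto simp: subst_fresh free_for_fresh)
next
  case (Mu \<phi> a z)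
  then obtain \<chi> where "subst \<chi> y \<phi> = a" "y \<in> FV \<chi>" "free_for \<phi> y \<chi>" by auto
  with Mu.prems Mu.hyps(2) show ?case by (intro exI[of _ "Mu z \<chi>"]) (auto simp: subst_fresh free_for_fresh)
next
  case (Nu \<phi> a z)
  then obtain \<chi> where "subst \<chi> y \<phi> = a" "y \<in> FV \<chi>" "free_for \<phi> y \<chi>" by auto
  with Nu.prems Nu.hyps(2) show ?case by (intro exI[of _ "Nu z \<chi>"]) (auto simp: subst_fresh free_for_fresh)
qed

lemma finite_FV: "finite (FV \<phi>)"
  by (induction \<phi>) auto

lemma finite_BV: "finite (BV \<phi>)"
  by (induction \<phi>) auto

lemma free_sub_iff_free_subfml: "free_sub \<phi> \<psi> \<longleftrightarrow> \<phi> \<unlhd> \<psi>"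
proof
  show "free_sub \<phi> \<psi> \<Longrightarrow> \<phi> \<unlhd> \<psi>"
    unfolding free_sub_def using free_subfml_of_context by blast
next
  assume "\<phi> \<unlhd> \<psi>"
  have "finite (FV \<psi> \<union> BV \<psi>)" by (simp add: finite_FV finite_BV)
  then obtain y :: var where "y \<notin> FV \<psi> \<union> BV \<psi>"
    using ex_new_if_finite infinite_UNIV_nat by blast
  then show "free_sub \<phi> \<psi>"
    unfolding free_sub_def using context_of_free_subfml[OF \<open>\<phi> \<unlhd> \<psi>\<close>] by blast
qed

lemma free_subfml_of_successor:
  assumes "tidy \<psi>" and "trace_step \<psi> \<phi>" and "\<tau> \<unlhd> \<phi>"
  shows "\<tau> \<unlhd> \<psi> \<or> \<psi> \<unlhd> \<tau>"
  using assms(2)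
proof cases
  case (7 x a)
  then have "FV \<psi> \<inter> BV a = {}" using \<open>tidy \<psi>\<close> by (auto simp: tidy_def)
  then show ?thesis using free_subfml_of_subst[of \<psi> a \<tau> x] 7 assms(3) by (auto intro: free_subfml.intros)
next
  case (8 x a)
  then have "FV \<psi> \<inter> BV a = {}" using \<open>tidy \<psi>\<close> by (auto simp: tidy_def)
  then show ?thesis using free_subfml_of_subst[of \<psi> a \<tau> x] 8 assms(3) by (auto intro: free_subfml.intros)
qed (use assms(3) in \<open>auto intro: free_subfml.intros\<close>)

lemma comparable_along_step:
  assumes "tidy \<psi>" and "trace_step \<psi> \<phi>" and "\<sigma> \<unlhd> \<psi>"
    and "\<forall>\<tau>. \<tau> \<unlhd> \<psi> \<longrightarrow> \<sigma> \<unlhd> \<tau> \<or> \<tau> \<unlhd> \<sigma>"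
  shows "\<forall>\<tau>. \<tau> \<unlhd> \<phi> \<longrightarrow> \<sigma> \<unlhd> \<tau> \<or> \<tau> \<unlhd> \<sigma>"
  using free_subfml_of_successor[OF assms(1,2)] assms(3,4) free_subfml_trans by blast

lemma free_subfml_successor_is_fixpoint:
  "trace_step \<psi> \<phi> \<Longrightarrow> \<psi> \<unlhd> \<phi> \<Longrightarrow> is_fixpoint \<psi>"
  by (induction rule: trace_step.cases) (auto dest: free_subfml_size)

lemma trace_least_free_subfml:
  fixes \<rho> :: "nat \<Rightarrow> 'p fml"
  assumes steps: "\<And>i. m \<le> i \<Longrightarrow> i < n \<Longrightarrow> trace_step (\<rho> (Suc i)) (\<rho> i)"
    and tidy: "\<And>i. m < i \<Longrightarrow> i \<le> n \<Longrightarrow> tidy (\<rho> i)"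
    and "m \<le> k" "k \<le> n"
  shows "\<exists>\<sigma>\<in>\<rho> ` {k..n}. (\<forall>j\<in>{k..n}. \<sigma> \<unlhd> \<rho> j) \<and> (\<forall>\<tau>. \<tau> \<unlhd> \<rho> k \<longrightarrow> \<sigma> \<unlhd> \<tau> \<or> \<tau> \<unlhd> \<sigma>)"
  using \<open>k \<le> n\<close>
proof (induction rule: inc_induct)
  case base
  show ?case by (auto intro: free_subfml.refl)
next
  case (step j)
  then obtain \<sigma> where \<sigma>: "\<sigma> \<in> \<rho> ` {Suc j..n}" "\<forall>i\<in>{Suc j..n}. \<sigma> \<unlhd> \<rho> i"
    and comparable: "\<forall>\<tau>. \<tau> \<unlhd> \<rho> (Suc j) \<longrightarrow> \<sigma> \<unlhd> \<tau> \<or> \<tau> \<unlhd> \<sigma>" by auto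
  have "m \<le> j" using \<open>m \<le> k\<close> step.hyps(1) by simp
  then have comparable': "\<forall>\<tau>. \<tau> \<unlhd> \<rho> j \<longrightarrow> \<sigma> \<unlhd> \<tau> \<or> \<tau> \<unlhd> \<sigma>"
    using comparable_along_step[OF tidy steps _ comparable] \<sigma>(2) step.hyps(2) by auto
  have split: "{j..n} = insert j {Suc j..n}" using step.hyps(2) by auto
  show ?case
  proof (cases "\<sigma> \<unlhd> \<rho> j")
    case True
    with \<sigma> comparable' show ?thesis unfolding split by auto
  next
    case False
    then have "\<rho> j \<unlhd> \<sigma>" using comparable' free_subfml.refl by blast
    then have "\<forall>i\<in>{j..n}. \<rho> j \<unlhd> \<rho> i"
      using \<sigma>(2) unfolding split by (auto intro: free_subfml.refl free_subfml_trans)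
    then show ?thesis
      using step.hyps(2) by (intro bexI[of _ "\<rho> j"]) (auto intro: free_subfml.refl)
  qed
qed

theorem mainTheorem2:
  fixes \<rho> :: "nat \<Rightarrow> 'p fml" and n :: nat
  assumes "n \<ge> 1"
    and "\<And>i. 1 \<le> i \<Longrightarrow> i < n \<Longrightarrow> trace_step (\<rho> (Suc i)) (\<rho> i)"
    and "\<And>i. 1 \<le> i \<Longrightarrow> i \<le> n \<Longrightarrow> tidy (\<rho> i)"
  shows "(\<exists>!\<sigma>. \<sigma> \<in> \<rho> ` {1..n} \<and> (\<forall>i\<in>{1..n}. free_sub \<sigma> (\<rho> i)))
       \<and> (\<forall>\<sigma>. \<sigma> \<in> \<rho> ` {1..n} \<and> (\<forall>i\<in>{1..n}. free_sub \<sigma> (\<rho> i))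
               \<longrightarrow> is_fixpoint (\<rho> 1) \<longrightarrow> is_fixpoint \<sigma>)"
proof (intro conjI allI impI)
  obtain \<sigma> where "\<sigma> \<in> \<rho> ` {1..n}" "\<forall>i\<in>{1..n}. \<sigma> \<unlhd> \<rho> i"
    using trace_least_free_subfml[of 1 n \<rho> 1] assms by auto
  then show "\<exists>!\<sigma>. \<sigma> \<in> \<rho> ` {1..n} \<and> (\<forall>i\<in>{1..n}. free_sub \<sigma> (\<rho> i))"
    unfolding free_sub_iff_free_subfml by (blast intro: free_subfml_antisym)
next
  fix \<sigma>
  assume "\<sigma> \<in> \<rho> ` {1..n} \<and> (\<forall>i\<in>{1..n}. free_sub \<sigma> (\<rho> i))" and "is_fixpoint (\<rho> 1)"
  then obtain m where m: "m \<in> {1..n}" "\<sigma> = \<rho> m" and below: "\<forall>i\<in>{1..n}. \<sigma> \<unlhd> \<rho> i"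
    by (auto simp: free_sub_iff_free_subfml)
  show "is_fixpoint \<sigma>"
  proof (cases "m = 1")
    case True
    with m \<open>is_fixpoint (\<rho> 1)\<close> show ?thesis by simp
  next
    case False
    with m have "m - 1 \<in> {1..n}" "m - 1 < n" "Suc (m - 1) = m" by auto
    with m(2) below assms(2)[of "m - 1"] show ?thesis
      by (auto intro: free_subfml_successor_is_fixpoint)
  qed
qed

end
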